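(* Consider the decentralized setting of the context. Assume the maximum delay is bounded by $\tau$ and that all loss functions $f^i_t$ are $G$-Lipschitz with respect to $\|\cdot\|$. For any $p\in\mathcal X$ with $h(p)\le r^2$, running D-DDA with constant stepsize \[\eta^i_t\equiv\eta=\frac{r}{G\bar M\sqrt{(2\tau+1)T}}\] guarantees, for any choice of reference indices $j_t\in\{1,\dots,M_t\}$, \[R^{g}_T(p)\le 2rG\bar M\sqrt{(2\tau+1)T}=O(\bar M\sqrt{\tau T}).\]
   Context: Let $\mathcal V$ be a finite-dimensional real vector space with norm $\|\cdot\|$ and dual norm $\|\cdot\|_*$, and $\mathcal X\subset\mathcal V$ closed convex. A regularizer $h:\mathcal V\to\mathbb R\cup\{+\infty\}$ is lower semicontinuous, $1$-strongly convex w.r.t. $\|\cdot\|$ on $\mathcal X$, with $\mathcal X\subset\operatorname{dom}h$, whose subdifferential admits a continuous selection, and $h\ge0$. Decentralized protocol: at each time $t=1,\dots,T$, $M_t\ge1$ agents are active, labelled $1,\dots,M_t$; agent $i$ plays $x^i_t\in\mathcal X$ against a convex loss $f^i_t$ (with $\mathcal X\subset\operatorname{dom}\partial f^i_t$) and the subgradient $g^i_t\in\partial f^i_t(x^i_t)$ is later shared. $\mathcal S^i_t\subset\{(j,s):1\le s\le t-1,\ 1\le j\le M_s\}$ is the set of (agent, time) indices of the feedback available for playing $x^i_t$. D-DDA: $x^i_t=\arg\min_{x\in\mathcal X}\{\sum_{(j,s)\in\mathcal S^i_t}\langle g^j_s,x\rangle+h(x)/\eta^i_t\}$. Maximum delay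 bounded by $\tau$: for all $t$, $i$, every $s\le t-\tau-1$ and $j\le M_s$, $(j,s)\in\mathcal S^i_t$. $\bar M=\sqrt{\frac1T\sum_{t=1}^TM_t^2}$. Collective regret with reference agents $j_t$: $R^{g}_T(p)=\sum_{t=1}^T\sum_{i=1}^{M_t}f^i_t(x^{j_t}_t)-\sum_{t=1}^T\sum_{i=1}^{M_t}f^i_t(p)$. *)

theory Defs
  imports "HOL-Analysis.Analysis" "HOL-Library.Extended_Real"
begin

text \<open>The finite-dimensional real vector space V is modelled by a type 'v of class
euclidean_space; its inner product is used only to identify V* with V (dual pairing).
The norm of the paper is an arbitrary norm N, not the Euclidean one.\<close>

definition is_norm :: "('v::real_vector \<Rightarrow> real) \<Rightarrow> bool" where
  "is_norm N \<longleftrightarrow> (\<forall>x y. N (x + y) \<le> N x + N y) \<and> (\<forall>c x. N (c *\<^sub>R x) = \<bar>c\<bar> * N x)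
     \<and> (\<forall>x. N x = 0 \<longleftrightarrow> x = 0)"

definition dual_norm :: "('v::real_inner \<Rightarrow> real) \<Rightarrow> 'v \<Rightarrow> real" where
  "dual_norm N g = Sup {g \<bullet> x | x. N x \<le> 1}"

definition subgrad :: "('v::real_inner \<Rightarrow> real) \<Rightarrow> 'v \<Rightarrow> 'v set" where
  "subgrad f x = {g. \<forall>y. f x + g \<bullet> (y - x) \<le> f y}"

definition edom :: "('v \<Rightarrow> ereal) \<Rightarrow> 'v set" where
  "edom h = {x. h x < \<infinity>}"

definition esubgrad :: "('v::real_inner \<Rightarrow> ereal) \<Rightarrow> 'v \<Rightarrow> 'v set" where
  "esubgrad h x = {g. \<bar>h x\<bar> \<noteq> (\<infinity>::ereal) \<and> (\<forall>y. h x + ereal (g \<bullet> (y - x)) \<le> h y)}"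

definition lsc_fun :: "('v::topological_space \<Rightarrow> ereal) \<Rightarrow> bool" where
  "lsc_fun h \<longleftrightarrow> (\<forall>x. \<forall>c. c < h x \<longrightarrow> eventually (\<lambda>y. c < h y) (at x))"

definition strongly_convex_on :: "'v::real_vector set \<Rightarrow> ('v \<Rightarrow> real) \<Rightarrow> ('v \<Rightarrow> ereal) \<Rightarrow> bool" where
  "strongly_convex_on X N h \<longleftrightarrow> (\<forall>x\<in>X. \<forall>y\<in>X. \<forall>\<theta>::real. 0 \<le> \<theta> \<and> \<theta> \<le> 1 \<longrightarrow>
      h (\<theta> *\<^sub>R x + (1 - \<theta>) *\<^sub>R y) \<le>
      ereal \<theta> * h x + ereal (1 - \<theta>) * h y - ereal (\<theta> * (1 - \<theta>) / 2 * (N (x - y))\<^sup>2))"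

definition has_continuous_subgrad_selection :: "('v::euclidean_space \<Rightarrow> ereal) \<Rightarrow> bool" where
  "has_continuous_subgrad_selection h \<longleftrightarrow>
     (\<exists>s. continuous_on {x. esubgrad h x \<noteq> {}} s \<and> (\<forall>x. esubgrad h x \<noteq> {} \<longrightarrow> s x \<in> esubgrad h x))"

definition lipschitz_wrt :: "('v \<Rightarrow> real) \<Rightarrow> real \<Rightarrow> ('v::real_vector \<Rightarrow> real) \<Rightarrow> bool" where
  "lipschitz_wrt N G f \<longleftrightarrow> (\<forall>x y. \<bar>f x - f y\<bar> \<le> G * N (x - y))"

definition feedback_ok :: "(nat \<Rightarrow> nat) \<Rightarrow> nat \<Rightarrow> (nat \<times> nat) set \<Rightarrow> bool" where
  "feedback_ok M t S \<longleftrightarrow> S \<subseteq> {(j, s). 1 \<le> s \<and> s + 1 \<le> t \<and> 1 \<le> j \<and> j \<le> M s}"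

definition dda_argmin :: "'v::real_inner set \<Rightarrow> ('v \<Rightarrow> ereal) \<Rightarrow> real \<Rightarrow> (nat \<Rightarrow> nat \<Rightarrow> 'v)
     \<Rightarrow> (nat \<times> nat) set \<Rightarrow> 'v \<Rightarrow> bool" where
  "dda_argmin X h \<eta> g S x \<longleftrightarrow> x \<in> X \<and>
     (\<forall>y\<in>X. ereal (\<Sum>(j, s)\<in>S. g s j \<bullet> x) + h x / ereal \<eta>
             \<le> ereal (\<Sum>(j, s)\<in>S. g s j \<bullet> y) + h y / ereal \<eta>)"

definition Mbar :: "(nat \<Rightarrow> nat) \<Rightarrow> nat \<Rightarrow> real" where
  "Mbar M T = sqrt ((1 / real T) * (\<Sum>t=1..T. (real (M t))\<^sup>2))"

end

theory Submission
  imports Defs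
begin

(* Every played point is compared with the virtual iterate y_t, the D-DDA point computed from all
   gradients of rounds 1..t-1. Strong convexity of h makes the minimiser of <a,x> + h(x)/eta an
   eta-Lipschitz function of a in the dual norm. Hence x^i_t, x^j_t and y_t lie within eta G D_t of
   each other, where D_t counts the gradients of the last tau rounds, the only ones that may still be
   missing at time t, and y_t moves by at most eta G M_t per round. The be-the-leader bound for y gives
     R <= h(p)/eta + eta G^2 sum_t M_t^2 + 2 eta G^2 sum_t M_t D_t,
   and sum_t M_t D_t <= tau sum_t M_t^2 by AM-GM, since each round is pending in at most tau later
   rounds. The stepsize balances r^2/eta against eta G^2 (2 tau + 1) T Mbar^2. *)

section \<open>Norms on a finite-dimensional space\<close>

lemma is_norm_scaleR: "is_norm N \<Longrightarrow> N (c *\<^sub>R x) = \<bar>c\<bar> * N x"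
  by (simp add: is_norm_def)

lemma is_norm_triangle: "is_norm N \<Longrightarrow> N (x + y) \<le> N x + N y"
  by (simp add: is_norm_def)

lemma is_norm_eq_0_iff: "is_norm N \<Longrightarrow> N x = 0 \<longleftrightarrow> x = 0"
  by (simp add: is_norm_def)

lemma is_norm_zero: "is_norm N \<Longrightarrow> N 0 = 0"
  by (simp add: is_norm_def)

lemma is_norm_minus: "is_norm N \<Longrightarrow> N (- x) = N x"
  using is_norm_scaleR[of N "-1" x] by simp

lemma is_norm_minus_commute: "is_norm N \<Longrightarrow> N (x - y) = N (y - x)"
  using is_norm_minus[of N "x - y"] by simp

lemma is_norm_nonneg: "is_norm N \<Longrightarrow> 0 \<le> N x"
  using is_norm_triangle[of N x "- x"] is_norm_minus[of N x] is_norm_zero[of N] by simp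

lemma is_norm_abs_diff_le: "is_norm N \<Longrightarrow> \<bar>N x - N y\<bar> \<le> N (x - y)"
  using is_norm_triangle[of N "x - y" y] is_norm_triangle[of N "y - x" x]
    is_norm_minus_commute[of N x y] by auto

lemma is_norm_sum_le:
  assumes "is_norm N"
  shows "N (\<Sum>a\<in>A. f a) \<le> (\<Sum>a\<in>A. N (f a))"
proof (induction A rule: infinite_finite_induct)
  case (insert a A)
  then show ?case using is_norm_triangle[OF assms, of "f a" "sum f A"] by simp
qed (simp_all add: is_norm_zero[OF assms])

lemma is_norm_le_norm:
  fixes N :: "'v::euclidean_space \<Rightarrow> real"
  assumes "is_norm N"
  shows "N v \<le> (\<Sum>b\<in>Basis. N b) * norm v"
proof -
  have "N v = N (\<Sum>b\<in>Basis. (v \<bullet> b) *\<^sub>R b)" by (simp add: euclidean_representation)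
  also have "\<dots> \<le> (\<Sum>b\<in>Basis. N ((v \<bullet> b) *\<^sub>R b))" by (rule is_norm_sum_le[OF assms])
  also have "\<dots> = (\<Sum>b\<in>Basis. \<bar>v \<bullet> b\<bar> * N b)" by (simp add: is_norm_scaleR[OF assms])
  also have "\<dots> \<le> (\<Sum>b\<in>Basis. norm v * N b)"
    by (intro sum_mono mult_right_mono) (simp_all add: Basis_le_norm is_norm_nonneg[OF assms])
  finally show ?thesis by (simp add: sum_distrib_left mult.commute)
qed

lemma continuous_on_is_norm:
  fixes N :: "'v::euclidean_space \<Rightarrow> real"
  assumes "is_norm N"
  shows "continuous_on A N"
proof (rule lipschitz_on_continuous_on)
  show "(\<Sum>b\<in>Basis. N b)-lipschitz_on A N"
  proof (rule lipschitz_onI)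
    fix x y
    have "\<bar>N x - N y\<bar> \<le> (\<Sum>b\<in>Basis. N b) * norm (x - y)"
      using is_norm_abs_diff_le[OF assms] is_norm_le_norm[OF assms] order_trans by blast
    then show "dist (N x) (N y) \<le> (\<Sum>b\<in>Basis. N b) * dist x y"
      by (simp add: dist_real_def dist_norm)
  qed (simp add: sum_nonneg is_norm_nonneg[OF assms])
qed

text \<open>N attains a positive minimum on the Euclidean unit sphere.\<close>
lemma is_norm_ge_norm:
  fixes N :: "'v::euclidean_space \<Rightarrow> real"
  assumes "is_norm N"
  obtains c where "c > 0" and "\<And>v. c * norm v \<le> N v"
proof -
  obtain b :: 'v where "b \<in> Basis" using nonempty_Basis by blast
  then have "sphere (0::'v) 1 \<noteq> {}" by (auto simp: norm_Basis)
  then obtain u where u: "u \<in> sphere (0::'v) 1" and min: "\<And>w. w \<in> sphere 0 1 \<Longrightarrow> N u \<le> N w"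
    using continuous_attains_inf[OF compact_sphere _ continuous_on_is_norm[OF assms]] by blast
  have "N u > 0"
    using u is_norm_nonneg[OF assms, of u] is_norm_eq_0_iff[OF assms, of u] by fastforce
  moreover have "N u * norm v \<le> N v" for v
  proof (cases "v = 0")
    case False
    then have "N u \<le> N ((1 / norm v) *\<^sub>R v)" by (intro min) simp
    then show ?thesis using False by (simp add: is_norm_scaleR[OF assms] field_simps)
  qed (simp add: is_norm_zero[OF assms])
  ultimately show ?thesis using that by blast
qed

lemma subgrad_inner_le:
  assumes "g \<in> subgrad f x" and "lipschitz_wrt N G f"
  shows "g \<bullet> v \<le> G * N v"
proof -
  have "f x + g \<bullet> ((x + v) - x) \<le> f (x + v)"
    using assms(1) unfolding subgrad_def by blast
  moreover have "\<bar>f (x + v) - f x\<bar> \<le> G * N ((x + v) - x)"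
    using assms(2) unfolding lipschitz_wrt_def by blast
  ultimately show ?thesis by simp
qed

section \<open>Regularised linear minimisation\<close>

locale dda_regularizer =
  fixes N :: "'v::euclidean_space \<Rightarrow> real" and X :: "'v set" and h :: "'v \<Rightarrow> ereal" and \<eta> :: real
  assumes norm: "is_norm N" and X_closed: "closed X" and X_convex: "convex X"
    and X_nonempty: "X \<noteq> {}" and h_lsc: "lsc_fun h" and h_strongly_convex: "strongly_convex_on X N h"
    and X_dom: "X \<subseteq> edom h" and h_nonneg: "\<And>y. h y \<ge> 0" and eta_pos: "\<eta> > 0"
begin

text \<open>h is finite on X, so there the objective is the D-DDA objective; outside X the values of
  h_real are junk and never used.\<close>
definition h_real :: "'v \<Rightarrow> real" where
  "h_real z = real_of_ereal (h z)"

definition objective :: "'v \<Rightarrow> 'v \<Rightarrow> real" where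
  "objective a z = a \<bullet> z + h_real z / \<eta>"

definition is_minimizer :: "'v \<Rightarrow> 'v \<Rightarrow> bool" where
  "is_minimizer a x \<longleftrightarrow> x \<in> X \<and> (\<forall>z\<in>X. objective a x \<le> objective a z)"

lemma ereal_h_real: "z \<in> X \<Longrightarrow> h z = ereal (h_real z)"
  using X_dom h_nonneg[of z] unfolding h_real_def edom_def by (cases "h z") auto

lemma h_real_nonneg: "0 \<le> h_real z"
  unfolding h_real_def by (rule real_of_ereal_pos[OF h_nonneg])

lemma objective_strongly_convex:
  assumes z: "z \<in> X" and w: "w \<in> X" and "0 \<le> \<theta>" "\<theta> \<le> 1"
  shows "objective a (\<theta> *\<^sub>R z + (1 - \<theta>) *\<^sub>R w)
    \<le> \<theta> * objective a z + (1 - \<theta>) * objective a w - \<theta> * (1 - \<theta>) / (2 * \<eta>) * (N (z - w))\<^sup>2"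
proof -
  define m where "m = \<theta> *\<^sub>R z + (1 - \<theta>) *\<^sub>R w"
  have "m \<in> X"
    using assms X_convex unfolding convex_def m_def by auto
  moreover have "h m \<le> ereal \<theta> * h z + ereal (1 - \<theta>) * h w - ereal (\<theta> * (1 - \<theta>) / 2 * (N (z - w))\<^sup>2)"
    using assms h_strongly_convex unfolding strongly_convex_on_def m_def by blast
  ultimately have "h_real m \<le> \<theta> * h_real z + (1 - \<theta>) * h_real w - \<theta> * (1 - \<theta>) / 2 * (N (z - w))\<^sup>2"
    using ereal_h_real z w by simp
  then have "h_real m / \<eta> \<le> (\<theta> * h_real z + (1 - \<theta>) * h_real w - \<theta> * (1 - \<theta>) / 2 * (N (z - w))\<^sup>2) / \<eta>"
    using eta_pos by (simp add: divide_right_mono)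
  also have "\<dots> = \<theta> * (h_real z / \<eta>) + (1 - \<theta>) * (h_real w / \<eta>) - \<theta> * (1 - \<theta>) / (2 * \<eta>) * (N (z - w))\<^sup>2"
    by (simp add: diff_divide_distrib add_divide_distrib)
  finally show ?thesis
    unfolding m_def objective_def by (simp add: inner_add_right algebra_simps)
qed

lemma minimizer_quadratic_growth:
  assumes x: "is_minimizer a x" and z: "z \<in> X"
  shows "objective a x + (N (z - x))\<^sup>2 / (2 * \<eta>) \<le> objective a z"
proof -
  define q where "q = (N (z - x))\<^sup>2 / (2 * \<eta>)"
  have "q \<le> objective a z - objective a x"
  proof (rule field_le_mult_one_interval)
    fix \<mu> :: real assume "0 < \<mu>" "\<mu> < 1"
    then have "objective a x \<le> objective a ((1 - \<mu>) *\<^sub>R z + (1 - (1 - \<mu>)) *\<^sub>R x)"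
      using x z X_convex unfolding is_minimizer_def convex_def by simp
    also have "\<dots> \<le> (1 - \<mu>) * objective a z + \<mu> * objective a x - (1 - \<mu>) * \<mu> * q"
      using objective_strongly_convex[OF z, of x "1 - \<mu>" a] x \<open>\<mu> < 1\<close> \<open>0 < \<mu>\<close>
      unfolding is_minimizer_def q_def by (simp add: field_simps)
    finally have "(1 - \<mu>) * (\<mu> * q) \<le> (1 - \<mu>) * (objective a z - objective a x)"
      by (simp add: algebra_simps)
    then show "\<mu> * q \<le> objective a z - objective a x" using \<open>\<mu> < 1\<close> by simp
  qed
  then show ?thesis by (simp add: q_def)
qed

lemma minimizer_dist_le:
  assumes x: "is_minimizer a x" and y: "is_minimizer b y" and "0 \<le> c"
    and bound: "\<And>v. (b - a) \<bullet> v \<le> c * N v"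
  shows "N (x - y) \<le> \<eta> * c"
proof -
  define u where "u = N (x - y)"
  have "u\<^sup>2 / \<eta> = u\<^sup>2 / (2 * \<eta>) + u\<^sup>2 / (2 * \<eta>)" by (simp add: field_simps)
  also have "\<dots> \<le> objective a y - objective a x + objective b x - objective b y"
    using minimizer_quadratic_growth[OF x, of y] minimizer_quadratic_growth[OF y, of x] x y
      is_norm_minus_commute[OF norm, of x y]
    unfolding is_minimizer_def u_def by simp
  also have "\<dots> = (b - a) \<bullet> (x - y)" by (simp add: objective_def algebra_simps)
  also have "\<dots> \<le> c * u" using bound[of "x - y"] by (simp add: u_def)
  finally have "u * u \<le> (\<eta> * c) * u" using eta_pos by (simp add: field_simps power2_eq_square)
  moreover have "u \<ge> 0" using is_norm_nonneg[OF norm] by (simp add: u_def)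
  ultimately show ?thesis
    using eta_pos \<open>0 \<le> c\<close> by (cases "u = 0") (simp_all add: u_def)
qed

lemma objective_bounded_below:
  obtains L where "\<And>z. z \<in> X \<Longrightarrow> L \<le> objective a z"
proof -
  obtain c where c: "c > 0" "\<And>v. c * norm v \<le> N v" using is_norm_ge_norm[OF norm] by blast
  obtain x0 where x0: "x0 \<in> X" using X_nonempty by blast
  define \<beta> where "\<beta> = norm a / c"
  have "- \<eta> * \<beta>\<^sup>2 - norm a * norm x0 - h_real x0 / \<eta> \<le> objective a z" if z: "z \<in> X" for z
  proof -
    define u where "u = N (z - x0)"
    have "0 \<le> objective 0 ((1/2) *\<^sub>R z + (1 - 1/2) *\<^sub>R x0)"
      using h_real_nonneg eta_pos by (simp add: objective_def)
    also have "\<dots> \<le> 1/2 * objective 0 z + (1 - 1/2) * objective 0 x0 - 1/2 * (1 - 1/2) / (2 * \<eta>) * u\<^sup>2"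
      unfolding u_def by (rule objective_strongly_convex[OF z x0]) auto
    finally have h_z: "u\<^sup>2 / (4 * \<eta>) - h_real x0 / \<eta> \<le> h_real z / \<eta>"
      by (simp add: objective_def)
    have "norm (z - x0) \<le> u / c" using c by (simp add: u_def pos_le_divide_eq mult.commute)
    then have "norm a * norm z \<le> norm a * (u / c + norm x0)"
      using norm_triangle_sub[of z x0] by (intro mult_left_mono) auto
    then have "norm a * norm z \<le> \<beta> * u + norm a * norm x0"
      by (simp add: \<beta>_def algebra_simps)
    then have a_z: "- (\<beta> * u) - norm a * norm x0 \<le> a \<bullet> z"
      using norm_cauchy_schwarz[of a "- z"] by simp
    have "0 \<le> (u - 2 * \<beta> * \<eta>)\<^sup>2 / (4 * \<eta>)" using eta_pos by simp
    also have "\<dots> = u\<^sup>2 / (4 * \<eta>) - \<beta> * u + \<eta> * \<beta>\<^sup>2"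
      using eta_pos by (simp add: field_simps power2_eq_square)
    finally show ?thesis using h_z a_z by (simp add: objective_def)
  qed
  then show ?thesis using that by blast
qed

lemma Cauchy_minimizing_sequence:
  assumes zs: "\<And>n. zs n \<in> X" and lower: "\<And>z. z \<in> X \<Longrightarrow> m \<le> objective a z"
    and approx: "\<And>n. objective a (zs n) < m + inverse (real (Suc n))"
  shows "Cauchy zs"
proof -
  obtain c where c: "c > 0" "\<And>v. c * norm v \<le> N v" using is_norm_ge_norm[OF norm] by blast
  have close: "(c * dist (zs n) (zs k))\<^sup>2 < 8 * \<eta> * inverse (real (Suc K))"
    if "K \<le> n" "K \<le> k" for n k K
  proof -
    have "m \<le> objective a ((1/2) *\<^sub>R zs n + (1 - 1/2) *\<^sub>R zs k)"
      by (intro lower convexD[OF X_convex zs zs]) auto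
    also have "\<dots> \<le> 1/2 * objective a (zs n) + (1 - 1/2) * objective a (zs k)
        - 1/2 * (1 - 1/2) / (2 * \<eta>) * (N (zs n - zs k))\<^sup>2"
      by (rule objective_strongly_convex[OF zs zs]) auto
    finally have "(N (zs n - zs k))\<^sup>2 / (8 * \<eta>) < 1/2 * inverse (real (Suc n)) + 1/2 * inverse (real (Suc k))"
      using approx[of n] approx[of k] by simp
    also have "\<dots> \<le> inverse (real (Suc K))"
    proof -
      have "inverse (real (Suc n)) \<le> inverse (real (Suc K))"
        and "inverse (real (Suc k)) \<le> inverse (real (Suc K))"
        using that by (intro le_imp_inverse_le; simp)+
      then show ?thesis by linarith
    qed
    finally have "(N (zs n - zs k))\<^sup>2 < 8 * \<eta> * inverse (real (Suc K))"
      using eta_pos by (simp add: field_simps)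
    moreover have "(c * dist (zs n) (zs k))\<^sup>2 \<le> (N (zs n - zs k))\<^sup>2"
      using c by (intro power_mono) (simp_all add: dist_norm)
    ultimately show ?thesis by linarith
  qed
  show ?thesis
  proof (rule metric_CauchyI)
    fix e :: real assume "0 < e"
    have pos: "0 < 8 * \<eta>" using eta_pos by simp
    have "0 < (c * e)\<^sup>2 / (8 * \<eta>)" using c(1) \<open>0 < e\<close> eta_pos by simp
    then obtain K where "inverse (real (Suc K)) < (c * e)\<^sup>2 / (8 * \<eta>)"
      using reals_Archimedean by blast
    then have K: "8 * \<eta> * inverse (real (Suc K)) < (c * e)\<^sup>2"
      using pos_less_divide_eq[OF pos] by (simp add: mult.commute)
    have "dist (zs n) (zs k) < e" if "K \<le> n" "K \<le> k" for n k
    proof -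
      have "(c * dist (zs n) (zs k))\<^sup>2 < (c * e)\<^sup>2"
        using less_trans[OF close[OF that] K] .
      then have "c * dist (zs n) (zs k) < c * e"
        by (rule power_less_imp_less_base) (use c(1) \<open>0 < e\<close> in simp)
      then show ?thesis using c(1) by simp
    qed
    then show "\<exists>K. \<forall>n\<ge>K. \<forall>k\<ge>K. dist (zs n) (zs k) < e" by blast
  qed
qed

lemma eventually_objective_gt:
  assumes zs: "\<And>n. zs n \<in> X" and lim: "zs \<longlonglongrightarrow> z" and z: "z \<in> X" and "c < objective a z"
  shows "eventually (\<lambda>n. c < objective a (zs n)) sequentially"
proof -
  define \<delta> where "\<delta> = objective a z - c"
  have "\<delta> > 0" using \<open>c < objective a z\<close> by (simp add: \<delta>_def)
  define l where "l = ereal (h_real z - \<eta> * \<delta> / 2)"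
  have "l < h z" using ereal_h_real[OF z] eta_pos \<open>\<delta> > 0\<close> by (simp add: l_def)
  then have "eventually (\<lambda>y. l < h y) (at z)" using h_lsc unfolding lsc_fun_def by blast
  then have "eventually (\<lambda>y. l < h y) (nhds z)"
    unfolding eventually_at_filter by (rule eventually_mono) (use \<open>l < h z\<close> in auto)
  then have "eventually (\<lambda>n. l < h (zs n)) sequentially"
    using lim unfolding filterlim_iff by blast
  moreover have "(\<lambda>n. a \<bullet> zs n) \<longlonglongrightarrow> a \<bullet> z" by (intro tendsto_intros lim)
  then have "eventually (\<lambda>n. a \<bullet> z - \<delta> / 2 < a \<bullet> zs n) sequentially"
    using order_tendstoD(1)[of _ "a \<bullet> z" sequentially "a \<bullet> z - \<delta> / 2"] \<open>\<delta> > 0\<close> by simp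
  ultimately show ?thesis
  proof eventually_elim
    case (elim n)
    then have "h_real z - \<eta> * \<delta> / 2 < h_real (zs n)"
      using ereal_h_real[OF zs] by (simp add: l_def)
    then have "(h_real z - \<eta> * \<delta> / 2) / \<eta> < h_real (zs n) / \<eta>"
      using eta_pos by (rule divide_strict_right_mono)
    then have "h_real z / \<eta> - \<delta> / 2 < h_real (zs n) / \<eta>"
      using eta_pos by (simp add: diff_divide_distrib)
    with elim(2) have "objective a z - \<delta> < objective a (zs n)"
      unfolding objective_def by linarith
    then show ?case by (simp add: \<delta>_def)
  qed
qed

lemma minimizer_exists:
  obtains x where "is_minimizer a x"
proof -
  obtain L where "\<And>z. z \<in> X \<Longrightarrow> L \<le> objective a z" using objective_bounded_below by blast
  then have bdd: "bdd_below (objective a ` X)" by (metis bdd_belowI2)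
  define m where "m = Inf (objective a ` X)"
  have lower: "\<And>z. z \<in> X \<Longrightarrow> m \<le> objective a z"
    unfolding m_def by (rule cINF_lower[OF bdd])
  have "\<exists>z\<in>X. objective a z < m + inverse (real (Suc n))" for n
    unfolding m_def by (subst cINF_less_iff[OF X_nonempty bdd, symmetric]) simp
  then obtain zs where zs: "\<And>n. zs n \<in> X"
    and approx: "\<And>n. objective a (zs n) < m + inverse (real (Suc n))" by metis
  obtain z where lim: "zs \<longlonglongrightarrow> z"
    using Cauchy_minimizing_sequence[OF zs lower approx] Cauchy_convergent_iff convergent_def by blast
  have z: "z \<in> X" using closed_sequentially[OF X_closed zs lim] .
  have "objective a z \<le> m"
  proof (rule ccontr)
    assume "\<not> objective a z \<le> m"
    then have "eventually (\<lambda>n. (objective a z + m) / 2 < objective a (zs n)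
        \<and> inverse (real (Suc n)) < (objective a z - m) / 2) sequentially"
      by (intro eventually_conj eventually_objective_gt[OF zs lim z]
          order_tendstoD(2)[OF LIMSEQ_inverse_real_of_nat]) auto
    then obtain n where "(objective a z + m) / 2 < objective a (zs n)"
      and "inverse (real (Suc n)) < (objective a z - m) / 2"
      by (auto simp: eventually_sequentially)
    then show False using approx[of n] by simp
  qed
  then show ?thesis using that z lower unfolding is_minimizer_def by force
qed

lemma dda_argmin_iff_is_minimizer:
  "dda_argmin X h \<eta> g S x \<longleftrightarrow> is_minimizer (\<Sum>(j, s)\<in>S. g s j) x"
proof -
  have "ereal (\<Sum>(j, s)\<in>S. g s j \<bullet> z) + h z / ereal \<eta> = ereal (objective (\<Sum>(j, s)\<in>S. g s j) z)"
    if "z \<in> X" for z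
    using ereal_h_real[OF that] eta_pos
    by (simp add: objective_def inner_sum_left case_prod_unfold)
  then show ?thesis
    unfolding dda_argmin_def is_minimizer_def by auto
qed

lemma be_the_leader:
  assumes y: "\<And>n. is_minimizer (\<Sum>t=1..n. c t) (y (Suc n))"
  shows "(\<Sum>t=1..n. c t \<bullet> y (Suc t)) + h_real (y 1) / \<eta> \<le> objective (\<Sum>t=1..n. c t) (y (Suc n))"
proof (induction n)
  case (Suc n)
  have "objective (\<Sum>t=1..n. c t) (y (Suc n)) \<le> objective (\<Sum>t=1..n. c t) (y (Suc (Suc n)))"
    using y[of n] y[of "Suc n"] unfolding is_minimizer_def by blast
  then show ?case
    using Suc.IH by (simp add: objective_def inner_add_left)
qed (simp add: objective_def)

lemma ftrl_regret_le:
  assumes y: "\<And>n. is_minimizer (\<Sum>t=1..n. c t) (y (Suc n))" and p: "p \<in> X"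
  shows "(\<Sum>t=1..T. c t \<bullet> (y t - p)) \<le> h_real p / \<eta> + (\<Sum>t=1..T. c t \<bullet> (y t - y (Suc t)))"
proof -
  have "(\<Sum>t=1..T. c t \<bullet> y (Suc t)) + h_real (y 1) / \<eta> \<le> objective (\<Sum>t=1..T. c t) p"
    using be_the_leader[OF y, of T] y[of T] p unfolding is_minimizer_def by force
  moreover have "0 \<le> h_real (y 1) / \<eta>" using h_real_nonneg eta_pos by simp
  ultimately show ?thesis
    by (simp add: objective_def inner_diff_right inner_sum_left sum_subtractf)
qed

end

section \<open>Bounded delays\<close>

definition delay_window :: "nat \<Rightarrow> nat \<Rightarrow> nat \<Rightarrow> nat set" where
  "delay_window T \<tau> t = {s\<in>{1..T}. s + 1 \<le> t \<and> t \<le> s + \<tau>}"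

lemma sum_mult_window_sum_le:
  fixes a :: "nat \<Rightarrow> real"
  shows "(\<Sum>t=1..T. a t * (\<Sum>s\<in>delay_window T \<tau> t. a s))
    \<le> real \<tau> * (\<Sum>t=1..T. (a t)\<^sup>2)"
proof -
  let ?W = "\<lambda>t. {s\<in>{1..T}. s + 1 \<le> t \<and> t \<le> s + \<tau>}"
  let ?W' = "\<lambda>s. {t\<in>{1..T}. s + 1 \<le> t \<and> t \<le> s + \<tau>}"
  have card_W: "card (?W t) \<le> \<tau>" for t
  proof -
    have "?W t \<subseteq> {t - \<tau>..<t}" by auto
    from card_mono[OF finite_atLeastLessThan this] show ?thesis by simp
  qed
  have card_W': "card (?W' s) \<le> \<tau>" for s
  proof -
    have "?W' s \<subseteq> {s + 1..<s + 1 + \<tau>}" by auto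
    from card_mono[OF finite_atLeastLessThan this] show ?thesis by simp
  qed
  have "(\<Sum>t=1..T. a t * (\<Sum>s\<in>?W t. a s)) = (\<Sum>t=1..T. \<Sum>s\<in>?W t. a t * a s)"
    by (simp add: sum_distrib_left)
  also have "\<dots> \<le> (\<Sum>t=1..T. \<Sum>s\<in>?W t. ((a t)\<^sup>2 + (a s)\<^sup>2) / 2)"
    using sum_squares_bound by (intro sum_mono) (simp add: field_simps)
  also have "\<dots> = (\<Sum>t=1..T. real (card (?W t)) * (a t)\<^sup>2) / 2 + (\<Sum>t=1..T. \<Sum>s\<in>?W t. (a s)\<^sup>2) / 2"
    by (simp add: sum.distrib sum_divide_distrib add_divide_distrib)
  also have "(\<Sum>t=1..T. \<Sum>s\<in>?W t. (a s)\<^sup>2) = (\<Sum>s=1..T. real (card (?W' s)) * (a s)\<^sup>2)"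
    by (subst sum.swap_restrict) auto
  also have "(\<Sum>s=1..T. real (card (?W' s)) * (a s)\<^sup>2) \<le> (\<Sum>s=1..T. real \<tau> * (a s)\<^sup>2)"
    by (intro sum_mono mult_right_mono) (use card_W' in auto)
  also have "(\<Sum>t=1..T. real (card (?W t)) * (a t)\<^sup>2) \<le> (\<Sum>t=1..T. real \<tau> * (a t)\<^sup>2)"
    by (intro sum_mono mult_right_mono) (use card_W in auto)
  finally show ?thesis by (simp add: sum_distrib_left delay_window_def)
qed

locale delayed_dda = dda_regularizer N X h \<eta> for N :: "'v::euclidean_space \<Rightarrow> real" and X h \<eta> +
  fixes T \<tau> :: nat and M :: "nat \<Rightarrow> nat" and f :: "nat \<Rightarrow> nat \<Rightarrow> 'v \<Rightarrow> real"
    and x g :: "nat \<Rightarrow> nat \<Rightarrow> 'v" and S :: "nat \<Rightarrow> nat \<Rightarrow> (nat \<times> nat) set" and G :: real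
  assumes G_nonneg: "0 \<le> G"
    and f_lip: "\<And>t i. 1 \<le> t \<Longrightarrow> t \<le> T \<Longrightarrow> 1 \<le> i \<Longrightarrow> i \<le> M t \<Longrightarrow> lipschitz_wrt N G (f t i)"
    and g_sub: "\<And>t i. 1 \<le> t \<Longrightarrow> t \<le> T \<Longrightarrow> 1 \<le> i \<Longrightarrow> i \<le> M t \<Longrightarrow> g t i \<in> subgrad (f t i) (x t i)"
    and S_ok: "\<And>t i. 1 \<le> t \<Longrightarrow> t \<le> T \<Longrightarrow> 1 \<le> i \<Longrightarrow> i \<le> M t \<Longrightarrow> feedback_ok M t (S t i)"
    and delay: "\<And>t i s j. 1 \<le> t \<Longrightarrow> t \<le> T \<Longrightarrow> 1 \<le> i \<Longrightarrow> i \<le> M t \<Longrightarrow>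
                  1 \<le> s \<Longrightarrow> s + \<tau> + 1 \<le> t \<Longrightarrow> 1 \<le> j \<Longrightarrow> j \<le> M s \<Longrightarrow> (j, s) \<in> S t i"
    and dda: "\<And>t i. 1 \<le> t \<Longrightarrow> t \<le> T \<Longrightarrow> 1 \<le> i \<Longrightarrow> i \<le> M t \<Longrightarrow>
                dda_argmin X h \<eta> g (S t i) (x t i)"
begin

definition played :: "nat \<Rightarrow> (nat \<times> nat) set" where
  "played n = {(k, s). 1 \<le> s \<and> s \<le> n \<and> 1 \<le> k \<and> k \<le> M s}"

definition pending :: "nat \<Rightarrow> (nat \<times> nat) set" where
  "pending t = {(k, s). s \<in> delay_window T \<tau> t \<and> 1 \<le> k \<and> k \<le> M s}"

definition grad_sum :: "(nat \<times> nat) set \<Rightarrow> 'v" where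
  "grad_sum P = (\<Sum>(k, s)\<in>P. g s k)"

definition round_grad :: "nat \<Rightarrow> 'v" where
  "round_grad t = (\<Sum>i=1..M t. g t i)"

definition virtual_iterate :: "nat \<Rightarrow> 'v" where
  "virtual_iterate t = (SOME y. is_minimizer (grad_sum (played (t - 1))) y)"

lemma played_eq_image: "played n = (\<lambda>(s, k). (k, s)) ` (SIGMA s:{1..n}. {1..M s})"
  unfolding played_def by auto

lemma finite_played: "finite (played n)"
  unfolding played_eq_image by simp

lemma played_mono: "m \<le> n \<Longrightarrow> played m \<subseteq> played n"
  unfolding played_def by auto

lemma grad_sum_played: "grad_sum (played n) = (\<Sum>t=1..n. round_grad t)"
proof -
  have "grad_sum (played n) = (\<Sum>(s, k)\<in>(SIGMA s:{1..n}. {1..M s}). g s k)"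
    unfolding grad_sum_def played_eq_image
    by (subst sum.reindex) (auto simp: inj_on_def case_prod_unfold)
  then show ?thesis by (simp add: sum.Sigma round_grad_def)
qed

lemma pending_eq_image: "pending t = (\<lambda>(s, k). (k, s)) ` (SIGMA s:delay_window T \<tau> t. {1..M s})"
  unfolding pending_def by auto

lemma finite_pending: "finite (pending t)"
  unfolding pending_eq_image by (simp add: delay_window_def)

lemma card_pending: "card (pending t) = (\<Sum>s\<in>delay_window T \<tau> t. M s)"
  unfolding pending_eq_image by (subst card_image) (auto simp: inj_on_def delay_window_def)

lemma g_inner_le: "1 \<le> t \<Longrightarrow> t \<le> T \<Longrightarrow> 1 \<le> i \<Longrightarrow> i \<le> M t \<Longrightarrow> g t i \<bullet> v \<le> G * N v"
  using subgrad_inner_le g_sub f_lip by blast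

lemma round_grad_inner_le: "1 \<le> t \<Longrightarrow> t \<le> T \<Longrightarrow> round_grad t \<bullet> v \<le> real (M t) * (G * N v)"
  using sum_bounded_above[of "{1..M t}" "\<lambda>i. g t i \<bullet> v" "G * N v"] g_inner_le
  by (simp add: round_grad_def inner_sum_left)

lemma grad_sum_inner_le:
  assumes "P \<subseteq> played T"
  shows "grad_sum P \<bullet> v \<le> real (card P) * (G * N v)"
proof -
  have "grad_sum P \<bullet> v = (\<Sum>(k, s)\<in>P. g s k \<bullet> v)"
    by (simp add: grad_sum_def inner_sum_left case_prod_unfold)
  also have "\<dots> \<le> real (card P) * (G * N v)"
    using assms g_inner_le by (intro sum_bounded_above) (auto simp: played_def)
  finally show ?thesis .
qed

lemma minimizer_dist_le_card:
  assumes P: "P \<subseteq> played T" and Q: "Q \<subseteq> played T"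
    and u: "is_minimizer (grad_sum P) u" and w: "is_minimizer (grad_sum Q) w"
  shows "N (u - w) \<le> \<eta> * (G * real (card (sym_diff P Q)))"
proof (rule minimizer_dist_le[OF u w])
  have fin: "finite P" "finite Q" using P Q finite_played finite_subset by blast+
  show "0 \<le> G * real (card (sym_diff P Q))" using G_nonneg by simp
  fix v
  have "grad_sum Q - grad_sum P = grad_sum (Q - P) - grad_sum (P - Q)"
    using sum.Int_Diff[OF fin(1), of "\<lambda>(k, s). g s k" Q] sum.Int_Diff[OF fin(2), of "\<lambda>(k, s). g s k" P]
    unfolding grad_sum_def by (simp add: Int_commute)
  then have "(grad_sum Q - grad_sum P) \<bullet> v = grad_sum (Q - P) \<bullet> v + grad_sum (P - Q) \<bullet> (- v)"
    by (simp add: inner_diff_left)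
  also have "\<dots> \<le> real (card (Q - P)) * (G * N v) + real (card (P - Q)) * (G * N (- v))"
    using P Q by (intro add_mono grad_sum_inner_le) auto
  also have "\<dots> = G * real (card (sym_diff P Q)) * N v"
  proof -
    have "card (sym_diff P Q) = card (P - Q) + card (Q - P)"
      using fin by (intro card_Un_disjoint) auto
    then show ?thesis by (simp add: is_norm_minus[OF norm] algebra_simps)
  qed
  finally show "(grad_sum Q - grad_sum P) \<bullet> v \<le> G * real (card (sym_diff P Q)) * N v" .
qed

lemma feedback_subset_played:
  "1 \<le> t \<Longrightarrow> t \<le> T \<Longrightarrow> 1 \<le> i \<Longrightarrow> i \<le> M t \<Longrightarrow> S t i \<subseteq> played (t - 1)"
  using S_ok unfolding feedback_ok_def played_def by fastforce

lemma missing_feedback_pending: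
  assumes "1 \<le> t" "t \<le> T" "1 \<le> i" "i \<le> M t"
  shows "played (t - 1) - S t i \<subseteq> pending t"
proof
  fix q assume q: "q \<in> played (t - 1) - S t i"
  then obtain k s where ks: "q = (k, s)" "1 \<le> s" "s \<le> t - 1" "1 \<le> k" "k \<le> M s"
    by (auto simp: played_def)
  then have "\<not> s + \<tau> + 1 \<le> t" using delay[OF assms] q by blast
  then show "q \<in> pending t" using ks assms by (auto simp: pending_def delay_window_def)
qed

lemma iterate_is_minimizer:
  "1 \<le> t \<Longrightarrow> t \<le> T \<Longrightarrow> 1 \<le> i \<Longrightarrow> i \<le> M t \<Longrightarrow> is_minimizer (grad_sum (S t i)) (x t i)"
  using dda dda_argmin_iff_is_minimizer unfolding grad_sum_def by blast

lemma virtual_iterate_is_minimizer: "is_minimizer (grad_sum (played (t - 1))) (virtual_iterate t)"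
  unfolding virtual_iterate_def using minimizer_exists by (metis someI)

lemma dist_iterate_virtual_le:
  assumes "1 \<le> t" "t \<le> T" "1 \<le> i" "i \<le> M t"
  shows "N (x t i - virtual_iterate t) \<le> \<eta> * (G * real (card (pending t)))"
proof -
  have played: "played (t - 1) \<subseteq> played T" using \<open>t \<le> T\<close> by (simp add: played_mono)
  have "sym_diff (S t i) (played (t - 1)) \<subseteq> pending t"
    using feedback_subset_played[OF assms] missing_feedback_pending[OF assms] by blast
  note card_le = card_mono[OF finite_pending this]
  have "N (x t i - virtual_iterate t) \<le> \<eta> * (G * real (card (sym_diff (S t i) (played (t - 1)))))"
    using feedback_subset_played[OF assms] played
    by (intro minimizer_dist_le_card iterate_is_minimizer virtual_iterate_is_minimizer assms) auto
  also have "\<dots> \<le> \<eta> * (G * real (card (pending t)))"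
    using card_le eta_pos G_nonneg by (intro mult_left_mono) auto
  finally show ?thesis .
qed

lemma dist_iterates_le:
  assumes t: "1 \<le> t" "t \<le> T" and i: "1 \<le> i" "i \<le> M t" and j: "1 \<le> j" "j \<le> M t"
  shows "N (x t j - x t i) \<le> \<eta> * (G * real (card (pending t)))"
proof -
  have played: "played (t - 1) \<subseteq> played T" using \<open>t \<le> T\<close> by (simp add: played_mono)
  have "sym_diff (S t j) (S t i) \<subseteq> pending t"
    using feedback_subset_played[OF t i] feedback_subset_played[OF t j]
      missing_feedback_pending[OF t i] missing_feedback_pending[OF t j] by blast
  note card_le = card_mono[OF finite_pending this]
  have "N (x t j - x t i) \<le> \<eta> * (G * real (card (sym_diff (S t j) (S t i))))"
    using feedback_subset_played[OF t i] feedback_subset_played[OF t j] played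
    by (intro minimizer_dist_le_card iterate_is_minimizer t i j) auto
  also have "\<dots> \<le> \<eta> * (G * real (card (pending t)))"
    using card_le eta_pos G_nonneg by (intro mult_left_mono) auto
  finally show ?thesis .
qed

lemma dist_virtual_iterate_Suc_le:
  assumes "1 \<le> t" "t \<le> T"
  shows "N (virtual_iterate t - virtual_iterate (Suc t)) \<le> \<eta> * (G * real (M t))"
proof -
  obtain n where n: "t = Suc n" using assms by (cases t) auto
  have "sym_diff (played (t - 1)) (played t) = (\<lambda>k. (k, t)) ` {1..M t}"
    unfolding n played_def by (auto simp: image_iff le_Suc_eq)
  then have "card (sym_diff (played (t - 1)) (played t)) = M t"
    by (simp add: card_image inj_on_def)
  moreover have "N (virtual_iterate t - virtual_iterate (Suc t))
      \<le> \<eta> * (G * real (card (sym_diff (played (t - 1)) (played t))))"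
    using virtual_iterate_is_minimizer[of "Suc t"] assms
    by (intro minimizer_dist_le_card virtual_iterate_is_minimizer) (simp_all add: played_mono)
  ultimately show ?thesis by simp
qed

lemma round_regret_le:
  assumes t: "1 \<le> t" "t \<le> T" and j: "1 \<le> j" "j \<le> M t"
  shows "(\<Sum>i=1..M t. f t i (x t j) - f t i p)
    \<le> round_grad t \<bullet> (virtual_iterate t - p) + 2 * \<eta> * G\<^sup>2 * real (M t) * real (card (pending t))"
proof -
  define d where "d = \<eta> * (G * real (card (pending t)))"
  have "f t i (x t j) - f t i p \<le> g t i \<bullet> (virtual_iterate t - p) + 2 * (G * d)"
    if i: "1 \<le> i" "i \<le> M t" for i
  proof -
    have "f t i (x t j) - f t i (x t i) \<le> G * N (x t j - x t i)"
      using f_lip[OF t i] unfolding lipschitz_wrt_def by (metis abs_le_D1)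
    also have "\<dots> \<le> G * d"
      unfolding d_def using dist_iterates_le[OF t i j] G_nonneg by (rule mult_left_mono)
    finally have near_j: "f t i (x t j) - f t i (x t i) \<le> G * d" .
    have "f t i (x t i) + g t i \<bullet> (p - x t i) \<le> f t i p"
      using g_sub[OF t i] unfolding subgrad_def by blast
    then have "f t i (x t i) - f t i p \<le> g t i \<bullet> (x t i - virtual_iterate t) + g t i \<bullet> (virtual_iterate t - p)"
      by (simp add: inner_diff_right)
    also have "g t i \<bullet> (x t i - virtual_iterate t) \<le> G * d"
      unfolding d_def using g_inner_le[OF t i] dist_iterate_virtual_le[OF t i] G_nonneg
      by (meson mult_left_mono order_trans)
    finally show ?thesis using near_j by linarith
  qed
  then have "(\<Sum>i=1..M t. f t i (x t j) - f t i p) \<le> (\<Sum>i=1..M t. g t i \<bullet> (virtual_iterate t - p) + 2 * (G * d))"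
    by (intro sum_mono) auto
  also have "\<dots> = round_grad t \<bullet> (virtual_iterate t - p) + 2 * \<eta> * G\<^sup>2 * real (M t) * real (card (pending t))"
    by (simp add: round_grad_def inner_sum_left sum.distrib d_def power2_eq_square mult_ac)
  finally show ?thesis .
qed

lemma virtual_regret_le:
  assumes "p \<in> X"
  shows "(\<Sum>t=1..T. round_grad t \<bullet> (virtual_iterate t - p))
    \<le> h_real p / \<eta> + \<eta> * G\<^sup>2 * (\<Sum>t=1..T. (real (M t))\<^sup>2)"
proof -
  have "is_minimizer (\<Sum>t=1..n. round_grad t) (virtual_iterate (Suc n))" for n
    using virtual_iterate_is_minimizer[of "Suc n"] by (simp add: grad_sum_played)
  then have "(\<Sum>t=1..T. round_grad t \<bullet> (virtual_iterate t - p))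
      \<le> h_real p / \<eta> + (\<Sum>t=1..T. round_grad t \<bullet> (virtual_iterate t - virtual_iterate (Suc t)))"
    using assms by (rule ftrl_regret_le)
  also have "(\<Sum>t=1..T. round_grad t \<bullet> (virtual_iterate t - virtual_iterate (Suc t)))
      \<le> (\<Sum>t=1..T. \<eta> * G\<^sup>2 * (real (M t))\<^sup>2)"
  proof (rule sum_mono)
    fix t assume "t \<in> {1..T}"
    then have t: "1 \<le> t" "t \<le> T" by auto
    have "round_grad t \<bullet> (virtual_iterate t - virtual_iterate (Suc t))
        \<le> real (M t) * (G * N (virtual_iterate t - virtual_iterate (Suc t)))"
      by (rule round_grad_inner_le[OF t])
    also have "\<dots> \<le> real (M t) * (G * (\<eta> * (G * real (M t))))"
      using dist_virtual_iterate_Suc_le[OF t] G_nonneg by (intro mult_left_mono) auto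
    finally show "round_grad t \<bullet> (virtual_iterate t - virtual_iterate (Suc t)) \<le> \<eta> * G\<^sup>2 * (real (M t))\<^sup>2"
      by (simp add: power2_eq_square mult_ac)
  qed
  finally show ?thesis by (simp add: sum_distrib_left)
qed

lemma regret_le:
  assumes p: "p \<in> X" and jr: "\<And>t. 1 \<le> t \<Longrightarrow> t \<le> T \<Longrightarrow> 1 \<le> jr t \<and> jr t \<le> M t"
  shows "(\<Sum>t=1..T. \<Sum>i=1..M t. f t i (x t (jr t))) - (\<Sum>t=1..T. \<Sum>i=1..M t. f t i p)
    \<le> h_real p / \<eta> + \<eta> * G\<^sup>2 * (2 * real \<tau> + 1) * (\<Sum>t=1..T. (real (M t))\<^sup>2)"
proof -
  have "(\<Sum>t=1..T. \<Sum>i=1..M t. f t i (x t (jr t))) - (\<Sum>t=1..T. \<Sum>i=1..M t. f t i p)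
      = (\<Sum>t=1..T. \<Sum>i=1..M t. f t i (x t (jr t)) - f t i p)"
    by (simp add: sum_subtractf)
  also have "\<dots> \<le> (\<Sum>t=1..T. round_grad t \<bullet> (virtual_iterate t - p)
      + 2 * \<eta> * G\<^sup>2 * real (M t) * real (card (pending t)))"
    using jr by (intro sum_mono round_regret_le) auto
  also have "\<dots> = (\<Sum>t=1..T. round_grad t \<bullet> (virtual_iterate t - p))
      + 2 * \<eta> * G\<^sup>2 * (\<Sum>t=1..T. real (M t) * (\<Sum>s\<in>delay_window T \<tau> t. real (M s)))"
    by (simp add: sum.distrib sum_distrib_left card_pending mult_ac)
  also have "\<dots> \<le> h_real p / \<eta> + \<eta> * G\<^sup>2 * (\<Sum>t=1..T. (real (M t))\<^sup>2)
      + 2 * \<eta> * G\<^sup>2 * (real \<tau> * (\<Sum>t=1..T. (real (M t))\<^sup>2))"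
    using virtual_regret_le[OF p] sum_mult_window_sum_le[where a = "\<lambda>t. real (M t)"] eta_pos
    by (intro add_mono mult_left_mono) auto
  finally show ?thesis by (simp add: algebra_simps)
qed

end

lemma balanced_stepsize:
  fixes r G m K T :: real
  assumes "0 < r" "0 < G" "0 < m" "0 < K" "0 < T"
  shows "r\<^sup>2 / (r / (G * m * sqrt (K * T))) + r / (G * m * sqrt (K * T)) * G\<^sup>2 * K * (m\<^sup>2 * T)
    = 2 * r * G * m * sqrt (K * T)"
proof -
  define s where "s = sqrt (K * T)"
  have "0 < s" and s_sq: "K * T = s * s" using assms by (simp_all add: s_def)
  have "r / (G * m * s) * G\<^sup>2 * K * (m\<^sup>2 * T) = r * G * m * (K * T) / s"
    using assms \<open>0 < s\<close> by (simp add: field_simps power2_eq_square)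
  also have "\<dots> = r * G * m * s" using \<open>0 < s\<close> by (simp add: s_sq)
  finally show ?thesis
    using assms \<open>0 < s\<close> by (simp add: s_def[symmetric] field_simps power2_eq_square)
qed

theorem theorem3:
  fixes N :: "'v::euclidean_space \<Rightarrow> real"
    and X :: "'v set" and h :: "'v \<Rightarrow> ereal"
    and T \<tau> :: nat and M :: "nat \<Rightarrow> nat"
    and f :: "nat \<Rightarrow> nat \<Rightarrow> 'v \<Rightarrow> real"   \<comment> \<open>f t i = f^i_t\<close>
    and x g :: "nat \<Rightarrow> nat \<Rightarrow> 'v"          \<comment> \<open>x t i = x^i_t, g t i = g^i_t\<close>
    and S :: "nat \<Rightarrow> nat \<Rightarrow> (nat \<times> nat) set" \<comment> \<open>S t i = S^i_t, pairs (agent, time)\<close>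
    and G r :: real and p :: 'v and jr :: "nat \<Rightarrow> nat"
  assumes norm: "is_norm N"
    and X_closed: "closed X" and X_convex: "convex X"
    and h_lsc: "lsc_fun h" and h_sc: "strongly_convex_on X N h"
    and X_dom: "X \<subseteq> edom h"
    and h_sel: "has_continuous_subgrad_selection h"
    and h_nonneg: "\<And>y. h y \<ge> 0"
    and T_pos: "T \<ge> 1" and G_pos: "G > 0" and r_pos: "r > 0"
    and M_pos: "\<And>t. 1 \<le> t \<Longrightarrow> t \<le> T \<Longrightarrow> M t \<ge> 1"
    and f_convex: "\<And>t i. 1 \<le> t \<Longrightarrow> t \<le> T \<Longrightarrow> 1 \<le> i \<Longrightarrow> i \<le> M t \<Longrightarrow> convex_on UNIV (f t i)"
    and f_lip: "\<And>t i. 1 \<le> t \<Longrightarrow> t \<le> T \<Longrightarrow> 1 \<le> i \<Longrightarrow> i \<le> M t \<Longrightarrow> lipschitz_wrt N G (f t i)"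
    and g_sub: "\<And>t i. 1 \<le> t \<Longrightarrow> t \<le> T \<Longrightarrow> 1 \<le> i \<Longrightarrow> i \<le> M t \<Longrightarrow> g t i \<in> subgrad (f t i) (x t i)"
    and S_ok: "\<And>t i. 1 \<le> t \<Longrightarrow> t \<le> T \<Longrightarrow> 1 \<le> i \<Longrightarrow> i \<le> M t \<Longrightarrow> feedback_ok M t (S t i)"
    and delay: "\<And>t i s j. 1 \<le> t \<Longrightarrow> t \<le> T \<Longrightarrow> 1 \<le> i \<Longrightarrow> i \<le> M t \<Longrightarrow>
                  1 \<le> s \<Longrightarrow> s + \<tau> + 1 \<le> t \<Longrightarrow> 1 \<le> j \<Longrightarrow> j \<le> M s \<Longrightarrow> (j, s) \<in> S t i"
    and dda: "\<And>t i. 1 \<le> t \<Longrightarrow> t \<le> T \<Longrightarrow> 1 \<le> i \<Longrightarrow> i \<le> M t \<Longrightarrow>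
                dda_argmin X h (r / (G * Mbar M T * sqrt ((2 * real \<tau> + 1) * real T))) g (S t i) (x t i)"
    and p_in: "p \<in> X" and p_h: "h p \<le> ereal (r\<^sup>2)"
    and jr_ok: "\<And>t. 1 \<le> t \<Longrightarrow> t \<le> T \<Longrightarrow> 1 \<le> jr t \<and> jr t \<le> M t"
  shows "(\<Sum>t=1..T. \<Sum>i=1..M t. f t i (x t (jr t))) - (\<Sum>t=1..T. \<Sum>i=1..M t. f t i p)
           \<le> 2 * r * G * Mbar M T * sqrt ((2 * real \<tau> + 1) * real T)"
proof -
  define K where "K = 2 * real \<tau> + 1"
  define \<eta> where "\<eta> = r / (G * Mbar M T * sqrt (K * real T))"
  have "0 < (\<Sum>t=1..T. (real (M t))\<^sup>2)"
    using T_pos M_pos by (intro sum_pos) (auto simp: Suc_le_eq)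
  then have Mbar_pos: "0 < Mbar M T" and sum_sq: "(\<Sum>t=1..T. (real (M t))\<^sup>2) = (Mbar M T)\<^sup>2 * real T"
    using T_pos by (simp_all add: Mbar_def)
  have "0 < \<eta>" using G_pos r_pos Mbar_pos T_pos by (simp add: \<eta>_def K_def)
  then interpret delayed_dda N X h \<eta> T \<tau> M f x g S G
    using norm X_closed X_convex h_lsc h_sc X_dom h_nonneg p_in G_pos f_lip g_sub S_ok delay dda
    by unfold_locales (auto simp: \<eta>_def K_def)
  have "h_real p \<le> r\<^sup>2" using p_h ereal_h_real[OF p_in] by simp
  have "(\<Sum>t=1..T. \<Sum>i=1..M t. f t i (x t (jr t))) - (\<Sum>t=1..T. \<Sum>i=1..M t. f t i p)
      \<le> h_real p / \<eta> + \<eta> * G\<^sup>2 * K * (\<Sum>t=1..T. (real (M t))\<^sup>2)"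
    unfolding K_def by (rule regret_le[OF p_in jr_ok])
  also have "\<dots> \<le> r\<^sup>2 / \<eta> + \<eta> * G\<^sup>2 * K * ((Mbar M T)\<^sup>2 * real T)"
    unfolding sum_sq using \<open>h_real p \<le> r\<^sup>2\<close> \<open>0 < \<eta>\<close> by (simp add: divide_right_mono)
  also have "\<dots> = 2 * r * G * Mbar M T * sqrt (K * real T)"
    unfolding \<eta>_def using r_pos G_pos Mbar_pos T_pos by (intro balanced_stepsize) (simp_all add: K_def)
  finally show ?thesis by (simp add: K_def)
qed

end
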